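(* Let $n\ge 1$ and let $\mathbf{P}_A,\mathbf{P}_B,\mathbf{Q}_A,\mathbf{Q}_B\in\mathbb{R}^{n\times n}$ be symmetric positive definite; put $\mathbf{C}_A=\mathbf{P}_A+\mathbf{Q}_A$, $\mathbf{C}_B=\mathbf{P}_B+\mathbf{Q}_B$. Let $J$ be an increasing cost function and let $\omega^*\in\arg\min_{\omega\in[0,1]}J(\mathbf{B}_{\mathrm{SCI}}(\omega))$, $\bar\omega^*=1-\omega^*$. Then the triple $\mathbf{K}_A^*=\omega^*\mathbf{B}_{\mathrm{SCI}}(\omega^* )(\mathbf{P}_A+\omega^*\mathbf{Q}_A)^{-1}$, $\mathbf{K}_B^*=\bar\omega^*\mathbf{B}_{\mathrm{SCI}}(\omega^* )(\mathbf{P}_B+\bar\omega^*\mathbf{Q}_B)^{-1}$, $\mathbf{B}_F^*=\mathbf{B}_{\mathrm{SCI}}(\omega^* )$ is a solution of the problem: minimize $J(\mathbf{B}_F)$ over all pairs $(\mathbf{K},\mathbf{B}_F)$ defining a conservative fusion.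
   Context: $\mathcal{A}_{\mathrm{Split}}=\{\mathbf{M}\in\mathbb{R}^{n\times n} : \begin{bmatrix}\mathbf{P}_A & \mathbf{M}\\ \mathbf{M}^\intercal & \mathbf{P}_B\end{bmatrix}\succeq 0\}$. For $\mathbf{K}=(\mathbf{K}_A,\mathbf{K}_B)$ and $\mathbf{P}_{AB}\in\mathcal{A}_{\mathrm{Split}}$, $\mathbf{C}_F(\mathbf{K},\mathbf{P}_{AB})=\mathbf{K}_A\mathbf{C}_A\mathbf{K}_A^\intercal+\mathbf{K}_A\mathbf{P}_{AB}\mathbf{K}_B^\intercal+\mathbf{K}_B\mathbf{P}_{AB}^\intercal\mathbf{K}_A^\intercal+\mathbf{K}_B\mathbf{C}_B\mathbf{K}_B^\intercal$. A pair $(\mathbf{K},\mathbf{B}_F)$ ($\mathbf{B}_F$ symmetric) defines a conservative fusion if $\mathbf{K}_A+\mathbf{K}_B=\mathbf{I}$ and $\mathbf{B}_F\succeq\mathbf{C}_F(\mathbf{K},\mathbf{P}_{AB})$ for all $\mathbf{P}_{AB}\in\mathcal{A}_{\mathrm{Split}}$. For $\omega\in[0,1]$, $\bar\omega=1-\omega$: $\mathbf{B}_{\mathrm{SCI}}(\omega)^{-1}=\omega(\mathbf{P}_A+\omega\mathbf{Q}_A)^{-1}+\bar\omega(\mathbf{P}_B+\bar\omega\mathbf{Q}_B)^{-1}$. $J$ increasing means: $\mathbf{P}\preceq\mathbf{Q}\Rightarrow J(\mathbf{P})\le J(\mathbf{Q})$, and $\mathbf{P}\preceq\mathbf{Q}$,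 $\mathbf{P}\ne\mathbf{Q}\Rightarrow J(\mathbf{P})<J(\mathbf{Q})$ (Loewner order). *)

theory Defs
  imports "HOL-Analysis.Analysis"
begin

type_synonym 'n mat = "real ^ 'n ^ 'n"

definition sym_mat :: "real ^ 'n ^ 'n \<Rightarrow> bool" where
  "sym_mat M \<longleftrightarrow> transpose M = M"

definition psd :: "real ^ 'n ^ 'n \<Rightarrow> bool" where
  "psd M \<longleftrightarrow> sym_mat M \<and> (\<forall>x. 0 \<le> x \<bullet> (M *v x))"

definition pd :: "real ^ 'n ^ 'n \<Rightarrow> bool" where
  "pd M \<longleftrightarrow> sym_mat M \<and> (\<forall>x. x \<noteq> 0 \<longrightarrow> 0 < x \<bullet> (M *v x))"

definition loewner_le :: "real ^ 'n ^ 'n \<Rightarrow> real ^ 'n ^ 'n \<Rightarrow> bool" where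
  "loewner_le P Q \<longleftrightarrow> psd (Q - P)"

definition block_mat :: "real ^ 'n ^ 'n \<Rightarrow> real ^ 'n ^ 'n \<Rightarrow> real ^ 'n ^ 'n \<Rightarrow> real ^ 'n ^ 'n
    \<Rightarrow> real ^ ('n + 'n) ^ ('n + 'n)" where
  "block_mat A B C D = (\<chi> i j. case i of
      Inl i' \<Rightarrow> (case j of Inl j' \<Rightarrow> A $ i' $ j' | Inr j' \<Rightarrow> B $ i' $ j')
    | Inr i' \<Rightarrow> (case j of Inl j' \<Rightarrow> C $ i' $ j' | Inr j' \<Rightarrow> D $ i' $ j'))"

definition A_split :: "real ^ 'n ^ 'n \<Rightarrow> real ^ 'n ^ 'n \<Rightarrow> (real ^ 'n ^ 'n) set" where
  "A_split PA PB = {M. psd (block_mat PA M (transpose M) PB)}"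

definition C_F :: "real ^ 'n ^ 'n \<Rightarrow> real ^ 'n ^ 'n \<Rightarrow> real ^ 'n ^ 'n \<Rightarrow> real ^ 'n ^ 'n
    \<Rightarrow> real ^ 'n ^ 'n \<Rightarrow> real ^ 'n ^ 'n" where
  "C_F CA CB KA KB PAB =
     KA ** CA ** transpose KA + KA ** PAB ** transpose KB
     + KB ** transpose PAB ** transpose KA + KB ** CB ** transpose KB"

definition conservative_fusion ::
  "real ^ 'n ^ 'n \<Rightarrow> real ^ 'n ^ 'n \<Rightarrow> real ^ 'n ^ 'n \<Rightarrow> real ^ 'n ^ 'n
   \<Rightarrow> real ^ 'n ^ 'n \<Rightarrow> real ^ 'n ^ 'n \<Rightarrow> real ^ 'n ^ 'n \<Rightarrow> bool" where
  "conservative_fusion PA PB CA CB KA KB BF \<longleftrightarrow>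
     sym_mat BF \<and> KA + KB = mat 1 \<and>
     (\<forall>PAB \<in> A_split PA PB. loewner_le (C_F CA CB KA KB PAB) BF)"

definition B_SCI :: "real ^ 'n ^ 'n \<Rightarrow> real ^ 'n ^ 'n \<Rightarrow> real ^ 'n ^ 'n \<Rightarrow> real ^ 'n ^ 'n
    \<Rightarrow> real \<Rightarrow> real ^ 'n ^ 'n" where
  "B_SCI PA PB QA QB \<omega> = matrix_inv
     (\<omega> *\<^sub>R matrix_inv (PA + \<omega> *\<^sub>R QA)
      + (1 - \<omega>) *\<^sub>R matrix_inv (PB + (1 - \<omega>) *\<^sub>R QB))"

definition increasing_cost :: "(real ^ 'n ^ 'n \<Rightarrow> real) \<Rightarrow> bool" where
  "increasing_cost J \<longleftrightarrow>
     (\<forall>P Q. sym_mat P \<and> sym_mat Q \<and> loewner_le P Q \<longrightarrow> J P \<le> J Q) \<and>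
     (\<forall>P Q. sym_mat P \<and> sym_mat Q \<and> loewner_le P Q \<and> P \<noteq> Q \<longrightarrow> J P < J Q)"

end

(*
  Write u = K_A^T z, v = K_B^T z, so that u + v = z, and R_A = P_A + w Q_A, R_B = P_B + (1 - w) Q_B.

  For every weight w the SCI gains are conservative: R_A u = w B z and R_B v = (1 - w) B z, and
  testing the block condition defining A_Split on the vector ((1 - w) u, - w v) bounds the
  correlation term, which turns z^T C_F z into u^T R_A u / w + v^T R_B v / (1 - w) = z^T B_SCI(w) z.

  Conversely let (K, B_F) be any conservative fusion. The worst correlation in A_Split for the
  direction z is rank one and gives a + b + 2 sqrt (a b) <= d, where a = u^T P_A u, b = v^T P_B v
  and d = z^T B_F z - u^T Q_A u - v^T Q_B v. Hence the weights w with (1 - w) a + w b <= w (1 - w) d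
  form a subinterval of [0,1] for each z. Two such intervals always meet (otherwise a separating
  weight would make a quadratic form negative along a segment joining the two directions, which
  the intermediate value theorem rules out), so all of them have a common point w. Since
  z^T B_SCI(w) z is the minimum of u^T R_A u / w + v^T R_B v / (1 - w) over all splits u + v = z,
  this gives B_SCI(w) <= B_F, and monotonicity of J together with the choice of w* finishes the
  proof.
*)

theory Submission
  imports Defs
begin

section \<open>Quadratic forms\<close>

definition quad_form :: "real^'n^'n \<Rightarrow> real^'n \<Rightarrow> real" where
  "quad_form A x = x \<bullet> (A *v x)"

lemma quad_form_add: "quad_form (A + B) x = quad_form A x + quad_form B x"
  by (simp add: quad_form_def matrix_vector_mult_add_rdistrib inner_add_right)

lemma quad_form_diff: "quad_form (A - B) x = quad_form A x - quad_form B x"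
  by (simp add: quad_form_def matrix_vector_mult_diff_rdistrib inner_diff_right)

lemma quad_form_scaleR: "quad_form (c *\<^sub>R A) x = c * quad_form A x"
  by (simp add: quad_form_def scaleR_matrix_vector_assoc[symmetric])

lemma quad_form_scaleR_right: "quad_form A (c *\<^sub>R x) = c\<^sup>2 * quad_form A x"
  by (simp add: quad_form_def matrix_vector_mult_scaleR power2_eq_square)

lemma matrix_vector_mult_uminus_right: "A *v (- x) = - (A *v (x::real^'n))"
  using matrix_vector_mult_scaleR[of A "-1" x] by simp

lemma quad_form_uminus_right: "quad_form A (- x) = quad_form A x"
  by (simp add: quad_form_def matrix_vector_mult_uminus_right)

lemma quad_form_zero_right [simp]: "quad_form A 0 = 0"
  by (simp add: quad_form_def)

lemma quad_form_add_right:
  "quad_form A (x + y) = quad_form A x + (x \<bullet> (A *v y) + y \<bullet> (A *v x)) + quad_form A y"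
  by (simp add: quad_form_def matrix_vector_right_distrib inner_add_left inner_add_right)

lemma inner_matrix_vector_transpose: "x \<bullet> (A *v y) = (transpose A *v x) \<bullet> (y::real^'n)"
  by (simp add: dot_lmul_matrix)

lemma quad_form_conj: "quad_form (K ** A ** transpose K) x = quad_form A (transpose K *v x)"
  unfolding quad_form_def
  by (simp add: matrix_vector_mul_assoc[symmetric] inner_matrix_vector_transpose)

lemma continuous_on_quad_form [continuous_intros]:
  "continuous_on S f \<Longrightarrow> continuous_on S (\<lambda>t. quad_form A (f t))"
  unfolding quad_form_def
  by (intro continuous_intros bounded_linear.continuous_on[OF matrix_vector_mul_bounded_linear])

lemma transpose_add: "transpose (A + B) = transpose A + (transpose B :: real^'n^'n)"
  by (simp add: transpose_def vec_eq_iff)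

lemma transpose_mult_add_eq_self:
  "KA + KB = mat 1 \<Longrightarrow> transpose KA *v z + transpose KB *v z = (z::real^'n)"
  by (metis matrix_vector_mult_add_rdistrib transpose_add transpose_mat matrix_vector_mul_lid)

lemma transpose_diff: "transpose (A - B) = transpose A - (transpose B :: real^'n^'n)"
  by (simp add: transpose_def vec_eq_iff)

lemma sym_mat_add: "sym_mat A \<Longrightarrow> sym_mat B \<Longrightarrow> sym_mat (A + B)"
  unfolding sym_mat_def by (simp add: transpose_add)

lemma sym_mat_diff: "sym_mat A \<Longrightarrow> sym_mat B \<Longrightarrow> sym_mat (A - B)"
  unfolding sym_mat_def by (simp add: transpose_diff)

lemma sym_mat_scaleR: "sym_mat A \<Longrightarrow> sym_mat (c *\<^sub>R A)"
  unfolding sym_mat_def by (simp add: transpose_scalar)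

lemma sym_mat_inner_commute: "sym_mat A \<Longrightarrow> x \<bullet> (A *v y) = y \<bullet> (A *v x)"
  unfolding sym_mat_def by (metis inner_matrix_vector_transpose inner_commute)

lemma psd_iff_quad_form: "psd A \<longleftrightarrow> sym_mat A \<and> (\<forall>x. 0 \<le> quad_form A x)"
  by (simp add: psd_def quad_form_def)

lemma pd_iff_quad_form: "pd A \<longleftrightarrow> sym_mat A \<and> (\<forall>x. x \<noteq> 0 \<longrightarrow> 0 < quad_form A x)"
  by (simp add: pd_def quad_form_def)

lemma quad_form_nonneg: "psd A \<Longrightarrow> 0 \<le> quad_form A x"
  by (simp add: psd_iff_quad_form)

lemma quad_form_pos: "pd A \<Longrightarrow> x \<noteq> 0 \<Longrightarrow> 0 < quad_form A x"
  by (simp add: pd_iff_quad_form)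

lemma pd_imp_psd: "pd A \<Longrightarrow> psd A"
  unfolding pd_iff_quad_form psd_iff_quad_form
  by (metis order_le_less quad_form_zero_right)

lemma pd_quad_form_eq_0_iff: "pd A \<Longrightarrow> quad_form A x = 0 \<longleftrightarrow> x = 0"
  using quad_form_pos by fastforce

lemma quad_form_tangent_le:
  assumes "psd A"
  shows "2 * (x \<bullet> (A *v y)) - quad_form A y \<le> quad_form A x"
proof -
  have "0 \<le> quad_form A (x - y)"
    using assms by (rule quad_form_nonneg)
  also have "\<dots> = quad_form A x - 2 * (x \<bullet> (A *v y)) + quad_form A y"
    using assms sym_mat_inner_commute[of A y x] unfolding psd_def quad_form_def
    by (simp add: matrix_vector_mult_diff_distrib inner_diff_left inner_diff_right)
  finally show ?thesis by simp
qed

lemma psd_cauchy_schwarz: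
  assumes "psd A"
  shows "\<bar>x \<bullet> (A *v y)\<bar> \<le> sqrt (quad_form A x) * sqrt (quad_form A y)"
proof -
  let ?c = "x \<bullet> (A *v y)"
  have tangent: "2 * t * ?c - t\<^sup>2 * quad_form A y \<le> quad_form A x" for t
    using quad_form_tangent_le[OF assms, of x "t *\<^sub>R y"]
    by (simp add: quad_form_scaleR_right matrix_vector_mult_scaleR)
  have "?c\<^sup>2 \<le> quad_form A x * quad_form A y"
  proof (cases "quad_form A y = 0")
    case True
    have "?c = 0"
    proof (rule ccontr)
      assume "?c \<noteq> 0"
      then show False
        using tangent[of "(quad_form A x + 1) / (2 * ?c)"] True by simp
    qed
    then show ?thesis using True by simp
  next
    case False
    then have y: "0 < quad_form A y"
      using quad_form_nonneg[OF assms, of y] by simp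
    have "?c\<^sup>2 / quad_form A y \<le> quad_form A x"
      using tangent[of "?c / quad_form A y"] y by (simp add: field_simps power2_eq_square)
    then show ?thesis using y by (simp add: field_simps)
  qed
  then have "sqrt (?c\<^sup>2) \<le> sqrt (quad_form A x * quad_form A y)"
    by (rule real_sqrt_le_mono)
  then show ?thesis by (simp add: real_sqrt_mult)
qed

lemma loewner_le_imp_quad_form_le: "loewner_le A B \<Longrightarrow> quad_form A x \<le> quad_form B x"
  unfolding loewner_le_def psd_iff_quad_form quad_form_diff by simp

lemma loewner_leI:
  "sym_mat A \<Longrightarrow> sym_mat B \<Longrightarrow> (\<And>x. quad_form A x \<le> quad_form B x) \<Longrightarrow> loewner_le A B"
  unfolding loewner_le_def psd_iff_quad_form quad_form_diff by (simp add: sym_mat_diff)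

lemma pd_add_scaleR: "pd A \<Longrightarrow> psd B \<Longrightarrow> 0 \<le> c \<Longrightarrow> pd (A + c *\<^sub>R B)"
  unfolding pd_iff_quad_form
  by (simp add: sym_mat_add sym_mat_scaleR psd_iff_quad_form quad_form_add quad_form_scaleR
      add_pos_nonneg)

lemma pd_convex_comb:
  assumes "pd A" "pd B" "0 \<le> w" "w \<le> 1"
  shows "pd (w *\<^sub>R A + (1 - w) *\<^sub>R B)"
proof (cases "w = 0")
  case True
  then show ?thesis using assms(2) by simp
next
  case False
  then show ?thesis
    using assms pd_add_scaleR[of "w *\<^sub>R A" B "1 - w"]
    by (simp add: pd_iff_quad_form pd_imp_psd sym_mat_scaleR quad_form_scaleR)
qed

section \<open>Inverses of positive definite matrices\<close>

lemma
  fixes A :: "real^'n^'n"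
  assumes "invertible A"
  shows matrix_inv_right: "A ** matrix_inv A = mat 1"
    and matrix_inv_left: "matrix_inv A ** A = mat 1"
proof -
  have "\<exists>A'. A ** A' = mat 1 \<and> A' ** A = mat 1"
    using assms invertible_def by blast
  then have "A ** matrix_inv A = mat 1 \<and> matrix_inv A ** A = mat 1"
    unfolding matrix_inv_def by (rule someI_ex)
  then show "A ** matrix_inv A = mat 1" "matrix_inv A ** A = mat 1" by auto
qed

lemma matrix_inv_matrix_inv:
  fixes A :: "real^'n^'n"
  assumes "invertible A"
  shows "matrix_inv (matrix_inv A) = A"
proof -
  have inv: "invertible (matrix_inv A)"
    using matrix_inv_left[OF assms] matrix_inv_right[OF assms] invertible_def by blast
  have "matrix_inv (matrix_inv A) = matrix_inv (matrix_inv A) ** (matrix_inv A ** A)"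
    by (simp add: matrix_inv_left[OF assms])
  also have "\<dots> = A"
    by (simp add: matrix_mul_assoc matrix_inv_left[OF inv])
  finally show ?thesis .
qed

lemma pd_imp_invertible: "pd A \<Longrightarrow> invertible A"
  unfolding invertible_left_inverse matrix_left_invertible_ker pd_def
  by (metis inner_zero_right order_less_irrefl)

lemma sym_mat_matrix_inv:
  fixes A :: "real^'n^'n"
  assumes "invertible A" "sym_mat A"
  shows "sym_mat (matrix_inv A)"
proof -
  have "transpose (matrix_inv A) = matrix_inv A ** A ** transpose (matrix_inv A)"
    by (simp add: matrix_inv_left[OF assms(1)])
  also have "\<dots> = matrix_inv A ** transpose (matrix_inv A ** A)"
    using assms(2) by (simp add: matrix_mul_assoc matrix_transpose_mul sym_mat_def)
  also have "\<dots> = matrix_inv A"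
    by (simp add: matrix_inv_left[OF assms(1)])
  finally show ?thesis unfolding sym_mat_def .
qed

lemma pd_matrix_inv:
  fixes A :: "real^'n^'n"
  assumes "pd A"
  shows "pd (matrix_inv A)"
  unfolding pd_iff_quad_form
proof (intro conjI allI impI)
  have inv: "invertible A" using assms by (rule pd_imp_invertible)
  then show "sym_mat (matrix_inv A)"
    using assms by (simp add: sym_mat_matrix_inv pd_def)
  fix x :: "real^'n"
  assume "x \<noteq> 0"
  define y where "y = matrix_inv A *v x"
  have x: "x = A *v y"
    by (simp add: y_def matrix_vector_mul_assoc matrix_inv_right[OF inv])
  with \<open>x \<noteq> 0\<close> have "y \<noteq> 0" by auto
  with assms have "0 < quad_form A y" by (intro quad_form_pos)
  also have "quad_form A y = quad_form (matrix_inv A) x"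
    unfolding quad_form_def y_def[symmetric] by (simp add: x inner_commute)
  finally show "0 < quad_form (matrix_inv A) x" .
qed

section \<open>The split covariance set\<close>

lemma quad_form_block_mat:
  fixes A M N D :: "real^'n^'n"
  shows "quad_form (block_mat A M N D) w =
     quad_form A (\<chi> i. w $ Inl i) + (\<chi> i. w $ Inl i) \<bullet> (M *v (\<chi> i. w $ Inr i))
     + (\<chi> i. w $ Inr i) \<bullet> (N *v (\<chi> i. w $ Inl i)) + quad_form D (\<chi> i. w $ Inr i)"
proof -
  have sum_Plus: "(\<Sum>k\<in>UNIV. f k) = (\<Sum>i\<in>UNIV. f (Inl i)) + (\<Sum>i\<in>UNIV. f (Inr i))"
    for f :: "'n + 'n \<Rightarrow> real"
    using sum.Plus[of "UNIV::'n set" "UNIV::'n set" f] by (simp add: comp_def)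
  show ?thesis
    unfolding quad_form_def inner_vec_def matrix_vector_mult_def block_mat_def
    by (simp add: sum_Plus sum_distrib_left sum.distrib distrib_left)
qed

lemma sym_mat_block_mat:
  "sym_mat A \<Longrightarrow> sym_mat D \<Longrightarrow> sym_mat (block_mat A M (transpose M) D)"
  unfolding sym_mat_def block_mat_def transpose_def
  by (simp add: vec_eq_iff split: sum.splits)

lemma A_split_iff:
  fixes PA PB M :: "real^'n^'n"
  assumes "sym_mat PA" "sym_mat PB"
  shows "M \<in> A_split PA PB \<longleftrightarrow>
    (\<forall>p q. 0 \<le> quad_form PA p + 2 * (p \<bullet> (M *v q)) + quad_form PB q)"
    (is "_ \<longleftrightarrow> (\<forall>p q. ?nonneg p q)")
proof -
  have "M \<in> A_split PA PB \<longleftrightarrow> (\<forall>w. ?nonneg (\<chi> i. w $ Inl i) (\<chi> i. w $ Inr i))"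
    unfolding A_split_def psd_iff_quad_form quad_form_block_mat
    using assms by (simp add: sym_mat_block_mat inner_matrix_vector_transpose inner_commute add_ac)
  also have "\<dots> \<longleftrightarrow> (\<forall>p q. ?nonneg p q)"
  proof (intro iffI allI)
    fix p q :: "real^'n"
    assume "\<forall>w. ?nonneg (\<chi> i. w $ Inl i) (\<chi> i. w $ Inr i)"
    from this[rule_format, of "\<chi> k. case k of Inl i \<Rightarrow> p $ i | Inr i \<Rightarrow> q $ i"]
    show "?nonneg p q" by simp
  qed simp
  finally show ?thesis .
qed

definition outer_prod :: "real^'n \<Rightarrow> real^'n \<Rightarrow> real^'n^'n" where
  "outer_prod a b = (\<chi> i j. a $ i * b $ j)"

lemma inner_outer_prod_mult: "x \<bullet> (outer_prod a b *v y) = (x \<bullet> a) * (b \<bullet> y)"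
proof -
  have "outer_prod a b *v y = (b \<bullet> y) *\<^sub>R a"
    by (simp add: outer_prod_def vec_eq_iff matrix_vector_mult_def inner_vec_def sum_distrib_left
        mult_ac)
  then show ?thesis by simp
qed

lemma scaled_outer_prod_mem_A_split:
  fixes PA PB :: "real^'n^'n" and u v :: "real^'n"
  assumes PA: "psd PA" and PB: "psd PB" and pos: "0 < quad_form PA u" "0 < quad_form PB v"
  shows "(1 / (sqrt (quad_form PA u) * sqrt (quad_form PB v))) *\<^sub>R outer_prod (PA *v u) (PB *v v)
           \<in> A_split PA PB"
    (is "?M \<in> _")
  unfolding A_split_iff[OF PA[unfolded psd_def, THEN conjunct1] PB[unfolded psd_def, THEN conjunct1]]
proof (intro allI)
  fix p q :: "real^'n"
  let ?P = "quad_form PA p" and ?Q = "quad_form PB q"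
    and ?s = "sqrt (quad_form PA u)" and ?t = "sqrt (quad_form PB v)"
  have st: "0 < ?s * ?t"
    using pos by simp
  have "\<bar>p \<bullet> (PA *v u)\<bar> \<le> sqrt ?P * ?s" and "\<bar>q \<bullet> (PB *v v)\<bar> \<le> sqrt ?Q * ?t"
    using psd_cauchy_schwarz[OF PA, of p u] psd_cauchy_schwarz[OF PB, of q v] by simp_all
  then have prod: "\<bar>p \<bullet> (PA *v u)\<bar> * \<bar>q \<bullet> (PB *v v)\<bar> \<le> (sqrt ?P * ?s) * (sqrt ?Q * ?t)"
    by (intro mult_mono) auto
  have "p \<bullet> (?M *v q) = (p \<bullet> (PA *v u)) * (q \<bullet> (PB *v v)) / (?s * ?t)"
    by (simp add: scaleR_matrix_vector_assoc[symmetric] inner_outer_prod_mult inner_commute)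
  then have "\<bar>p \<bullet> (?M *v q)\<bar> = \<bar>p \<bullet> (PA *v u)\<bar> * \<bar>q \<bullet> (PB *v v)\<bar> / (?s * ?t)"
    using pos by (simp add: abs_mult)
  also have "\<dots> \<le> sqrt ?P * sqrt ?Q"
    using prod st by (simp add: divide_le_eq mult_ac)
  also have "\<dots> \<le> (?P + ?Q) / 2"
    unfolding real_sqrt_mult[symmetric]
    using quad_form_nonneg[OF PA] quad_form_nonneg[OF PB] by (rule arith_geo_mean_sqrt)
  finally have "- (p \<bullet> (?M *v q)) \<le> (?P + ?Q) / 2"
    by (rule abs_le_D2)
  then show "0 \<le> ?P + 2 * (p \<bullet> (?M *v q)) + ?Q"
    by (simp add: field_simps)
qed

lemma ex_A_split_inner_eq_sqrt:
  fixes PA PB :: "real^'n^'n" and u v :: "real^'n"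
  assumes PA: "psd PA" and PB: "psd PB"
  shows "\<exists>M\<in>A_split PA PB. u \<bullet> (M *v v) = sqrt (quad_form PA u * quad_form PB v)"
proof (cases "quad_form PA u = 0 \<or> quad_form PB v = 0")
  case True
  have "0 \<in> A_split PA PB"
    using assms by (simp add: A_split_iff psd_def quad_form_nonneg)
  then show ?thesis using True by force
next
  case False
  let ?ab = "quad_form PA u * quad_form PB v"
  have pos: "0 < quad_form PA u" "0 < quad_form PB v"
    using False quad_form_nonneg[OF PA, of u] quad_form_nonneg[OF PB, of v] by auto
  \<comment> \<open>the worst-case correlation for the pair \<open>(u, v)\<close> is rank one\<close>
  let ?M = "(1 / (sqrt (quad_form PA u) * sqrt (quad_form PB v))) *\<^sub>R outer_prod (PA *v u) (PB *v v)"
  have "u \<bullet> (?M *v v) = ?ab / sqrt ?ab"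
    by (simp add: scaleR_matrix_vector_assoc[symmetric] inner_outer_prod_mult quad_form_def
        inner_commute real_sqrt_mult)
  also have "\<dots> = sqrt ?ab"
    using pos by (simp add: real_div_sqrt)
  finally show ?thesis
    using scaled_outer_prod_mem_A_split[OF PA PB pos] by blast
qed

lemma sym_mat_C_F: "sym_mat CA \<Longrightarrow> sym_mat CB \<Longrightarrow> sym_mat (C_F CA CB KA KB PAB)"
  unfolding C_F_def sym_mat_def
  by (simp add: transpose_add matrix_transpose_mul matrix_mul_assoc ac_simps)

lemma quad_form_C_F:
  fixes CA CB KA KB PAB :: "real^'n^'n"
  shows "quad_form (C_F CA CB KA KB PAB) z = quad_form CA (transpose KA *v z)
     + 2 * ((transpose KA *v z) \<bullet> (PAB *v (transpose KB *v z))) + quad_form CB (transpose KB *v z)"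
proof -
  have cross: "quad_form (K ** P ** transpose L) z = (transpose K *v z) \<bullet> (P *v (transpose L *v z))"
    for K P L :: "real^'n^'n"
    unfolding quad_form_def
    by (simp add: matrix_vector_mul_assoc[symmetric] inner_matrix_vector_transpose)
  have "(transpose KB *v z) \<bullet> (transpose PAB *v (transpose KA *v z))
      = (transpose KA *v z) \<bullet> (PAB *v (transpose KB *v z))"
    by (simp add: inner_matrix_vector_transpose inner_commute)
  then show ?thesis
    unfolding C_F_def quad_form_add cross by (simp add: quad_form_def)
qed

lemma conservative_fusion_quad_form_bound:
  assumes "psd PA" "psd PB" and cons: "conservative_fusion PA PB CA CB KA KB BF"
  shows "quad_form CA (transpose KA *v z) + quad_form CB (transpose KB *v z)
      + 2 * sqrt (quad_form PA (transpose KA *v z) * quad_form PB (transpose KB *v z))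
      \<le> quad_form BF z"
proof -
  obtain M where "M \<in> A_split PA PB" and M:
    "(transpose KA *v z) \<bullet> (M *v (transpose KB *v z))
      = sqrt (quad_form PA (transpose KA *v z) * quad_form PB (transpose KB *v z))"
    using ex_A_split_inner_eq_sqrt[OF assms(1,2)] by blast
  then have "loewner_le (C_F CA CB KA KB M) BF"
    using cons unfolding conservative_fusion_def by blast
  then have "quad_form (C_F CA CB KA KB M) z \<le> quad_form BF z"
    by (rule loewner_le_imp_quad_form_le)
  then show ?thesis
    unfolding quad_form_C_F M by simp
qed

section \<open>The scalar weight polynomial\<close>

text \<open>For \<open>0 < w < 1\<close>, \<open>0 \<le> weight_poly a b d w\<close> says \<open>a / w + b / (1 - w) \<le> d\<close>: this is
  \<open>B_SCI w \<le> B_F\<close> in a single direction.\<close>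

definition weight_poly :: "real \<Rightarrow> real \<Rightarrow> real \<Rightarrow> real \<Rightarrow> real" where
  "weight_poly a b d w = w * (1 - w) * d - (1 - w) * a - w * b"

definition weight_disc :: "real \<Rightarrow> real \<Rightarrow> real \<Rightarrow> real" where
  "weight_disc a b d = (d + a - b)\<^sup>2 - 4 * a * d"

definition weight_lo :: "real \<Rightarrow> real \<Rightarrow> real \<Rightarrow> real" where
  "weight_lo a b d = (d + a - b - sqrt (weight_disc a b d)) / (2 * d)"

definition weight_hi :: "real \<Rightarrow> real \<Rightarrow> real \<Rightarrow> real" where
  "weight_hi a b d = (d + a - b + sqrt (weight_disc a b d)) / (2 * d)"

definition weight_vertex :: "real \<Rightarrow> real \<Rightarrow> real \<Rightarrow> real" where
  "weight_vertex a b d = (d + a - b) / (2 * d)"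

locale weight_poly_roots =
  fixes a b d :: real
  assumes a_nonneg: "0 \<le> a" and b_nonneg: "0 \<le> b" and ab_pos: "0 < a + b"
    and sqrt_bound: "a + b + 2 * sqrt (a * b) \<le> d"
begin

lemma d_pos: "0 < d"
  using ab_pos sqrt_bound a_nonneg b_nonneg by (smt (verit) real_sqrt_ge_zero zero_le_mult_iff)

lemma weight_disc_nonneg: "0 \<le> weight_disc a b d"
proof -
  have "(2 * sqrt (a * b))\<^sup>2 \<le> (d - a - b)\<^sup>2"
    using sqrt_bound a_nonneg b_nonneg by (intro power_mono) auto
  then show ?thesis
    using a_nonneg b_nonneg
    by (simp add: weight_disc_def power_mult_distrib power2_eq_square algebra_simps)
qed

lemma weight_poly_factor:
  "weight_poly a b d w = - d * (w - weight_lo a b d) * (w - weight_hi a b d)"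
  using d_pos weight_disc_nonneg
  by (simp add: weight_poly_def weight_lo_def weight_hi_def weight_disc_def field_simps
      power2_eq_square)

lemma weight_lo_le_vertex: "weight_lo a b d \<le> weight_vertex a b d"
  and weight_vertex_le_hi: "weight_vertex a b d \<le> weight_hi a b d"
  unfolding weight_lo_def weight_hi_def weight_vertex_def
  using d_pos weight_disc_nonneg by (intro divide_right_mono; simp)+

lemma weight_poly_nonneg_iff:
  "0 \<le> weight_poly a b d w \<longleftrightarrow> weight_lo a b d \<le> w \<and> w \<le> weight_hi a b d"
proof -
  have "0 \<le> weight_poly a b d w \<longleftrightarrow> (w - weight_lo a b d) * (w - weight_hi a b d) \<le> 0"
    unfolding weight_poly_factor using d_pos
    by (simp add: mult.assoc mult_le_0_iff zero_le_mult_iff)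
  also have "\<dots> \<longleftrightarrow> weight_lo a b d \<le> w \<and> w \<le> weight_hi a b d"
    using weight_lo_le_vertex weight_vertex_le_hi by (auto simp: mult_le_0_iff)
  finally show ?thesis .
qed

lemma weight_lo_nonneg: "0 \<le> weight_lo a b d"
proof -
  have "weight_disc a b d \<le> (d + a - b)\<^sup>2"
    unfolding weight_disc_def using a_nonneg d_pos by simp
  moreover have "0 \<le> d + a - b"
    using sqrt_bound a_nonneg b_nonneg by (smt (verit) real_sqrt_ge_zero zero_le_mult_iff)
  ultimately have "sqrt (weight_disc a b d) \<le> d + a - b"
    by (metis real_sqrt_abs abs_of_nonneg real_sqrt_le_mono)
  then show ?thesis
    unfolding weight_lo_def using d_pos by simp
qed

lemma weight_hi_le_1: "weight_hi a b d \<le> 1"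
proof -
  have "weight_disc a b d \<le> (d - a + b)\<^sup>2"
    unfolding weight_disc_def using b_nonneg d_pos by (simp add: power2_eq_square algebra_simps)
  moreover have "0 \<le> d - a + b"
    using sqrt_bound a_nonneg b_nonneg by (smt (verit) real_sqrt_ge_zero zero_le_mult_iff)
  ultimately have "sqrt (weight_disc a b d) \<le> d - a + b"
    by (metis real_sqrt_abs abs_of_nonneg real_sqrt_le_mono)
  then show ?thesis
    unfolding weight_hi_def using d_pos by simp
qed

end

lemma weighted_cross_le:
  fixes a b X w :: real
  assumes "0 < w" "w < 1" and "2 * (X * (w * (1 - w))) \<le> (1 - w)\<^sup>2 * a + w\<^sup>2 * b"
  shows "a + 2 * X + b \<le> a / w + b / (1 - w)"
proof -
  have "2 * X \<le> ((1 - w)\<^sup>2 * a + w\<^sup>2 * b) / (w * (1 - w))"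
    using assms by (simp add: pos_le_divide_eq)
  also have "\<dots> = a / w + b / (1 - w) - a - b"
    using assms(1,2) by (simp add: field_simps power2_eq_square)
  finally show ?thesis by linarith
qed

lemma pairwise_meeting_intervals_common_point:
  fixes L H :: "'a \<Rightarrow> real"
  assumes "I \<noteq> {}" and "\<And>i j. i \<in> I \<Longrightarrow> j \<in> I \<Longrightarrow> L i \<le> H j"
  shows "\<exists>w. \<forall>i\<in>I. L i \<le> w \<and> w \<le> H i"
proof -
  have bdd: "bdd_above (L ` I)"
    using assms by (meson bdd_aboveI2 ex_in_conv)
  show ?thesis
    using assms by (intro exI[of _ "Sup (L ` I)"]) (auto intro: cSup_upper[OF _ bdd] cSup_least)
qed

section \<open>A weight that works for every direction\<close>

lemma quad_form_segment_neg:
  assumes "quad_form G x < 0" "quad_form G y < 0" "x \<bullet> (G *v y) + y \<bullet> (G *v x) \<le> 0"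
    and "0 \<le> t" "t \<le> 1"
  shows "quad_form G ((1 - t) *\<^sub>R x + t *\<^sub>R y) < 0"
proof -
  have "quad_form G ((1 - t) *\<^sub>R x + t *\<^sub>R y) = (1 - t)\<^sup>2 * quad_form G x
      + (t * (1 - t)) * (x \<bullet> (G *v y) + y \<bullet> (G *v x)) + t\<^sup>2 * quad_form G y"
    unfolding quad_form_add_right quad_form_scaleR_right
    by (simp add: matrix_vector_mult_scaleR algebra_simps)
  moreover have "(t * (1 - t)) * (x \<bullet> (G *v y) + y \<bullet> (G *v x)) \<le> 0"
    using assms by (simp add: mult_nonneg_nonpos)
  moreover have "(1 - t)\<^sup>2 * quad_form G x + t\<^sup>2 * quad_form G y < 0"
  proof (cases "t = 0")
    case True
    then show ?thesis using assms(1) by simp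
  next
    case False
    then have "t\<^sup>2 * quad_form G y < 0"
      using assms(2) by (simp add: mult_pos_neg)
    moreover have "(1 - t)\<^sup>2 * quad_form G x \<le> 0"
      using assms(1) by (simp add: mult_nonneg_nonpos)
    ultimately show ?thesis by linarith
  qed
  ultimately show ?thesis by linarith
qed

locale weight_forms =
  fixes MA MB D :: "real^'n^'n"
  assumes MA_nonneg: "\<And>z. 0 \<le> quad_form MA z" and MB_nonneg: "\<And>z. 0 \<le> quad_form MB z"
    and MA_MB_pos: "\<And>z. z \<noteq> 0 \<Longrightarrow> 0 < quad_form MA z + quad_form MB z"
    and D_bound: "\<And>z. quad_form MA z + quad_form MB z
                     + 2 * sqrt (quad_form MA z * quad_form MB z) \<le> quad_form D z"
begin

definition "gap z = weight_poly (quad_form MA z) (quad_form MB z) (quad_form D z)"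
definition "lo z = weight_lo (quad_form MA z) (quad_form MB z) (quad_form D z)"
definition "hi z = weight_hi (quad_form MA z) (quad_form MB z) (quad_form D z)"
definition "vertex z = weight_vertex (quad_form MA z) (quad_form MB z) (quad_form D z)"

lemma roots: "z \<noteq> 0 \<Longrightarrow> weight_poly_roots (quad_form MA z) (quad_form MB z) (quad_form D z)"
  using MA_nonneg MB_nonneg MA_MB_pos D_bound by unfold_locales auto

lemma gap_nonneg_iff: "z \<noteq> 0 \<Longrightarrow> 0 \<le> gap z w \<longleftrightarrow> lo z \<le> w \<and> w \<le> hi z"
  unfolding gap_def lo_def hi_def by (rule weight_poly_roots.weight_poly_nonneg_iff[OF roots])

lemma gap_eq_quad_form:
  "gap z w = quad_form ((w * (1 - w)) *\<^sub>R D - (1 - w) *\<^sub>R MA - w *\<^sub>R MB) z"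
  by (simp add: gap_def weight_poly_def quad_form_diff quad_form_scaleR)

lemma continuous_on_vertex:
  assumes "continuous_on S f" "\<And>t. t \<in> S \<Longrightarrow> f t \<noteq> 0"
  shows "continuous_on S (\<lambda>t. vertex (f t))"
  unfolding vertex_def weight_vertex_def
  using assms weight_poly_roots.d_pos[OF roots]
  by (intro continuous_intros) force+

lemma ex_nonneg_gap_on_path:
  fixes z :: "real \<Rightarrow> real^'n"
  assumes "continuous_on {0..1} z" and nonzero: "\<And>t. t \<in> {0..1} \<Longrightarrow> z t \<noteq> 0"
    and "vertex (z 1) \<le> w" "w \<le> vertex (z 0)"
  shows "\<exists>t\<in>{0..1}. 0 \<le> gap (z t) w"
proof -
  obtain t where t: "t \<in> {0..1}" "vertex (z t) = w"
    using IVT2'[of "\<lambda>t. vertex (z t)" 1 w 0] continuous_on_vertex[OF assms(1) nonzero] assms(3,4)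
    by auto
  moreover have "lo (z t) \<le> vertex (z t)" "vertex (z t) \<le> hi (z t)"
    using weight_poly_roots.weight_lo_le_vertex[OF roots] weight_poly_roots.weight_vertex_le_hi[OF roots]
      nonzero[OF t(1)]
    by (simp_all add: lo_def hi_def vertex_def)
  ultimately show ?thesis
    using gap_nonneg_iff nonzero by auto
qed

lemma lo_le_hi:
  assumes x: "x \<noteq> 0" and y: "y \<noteq> 0"
  shows "lo x \<le> hi y"
proof (rule ccontr)
  assume "\<not> lo x \<le> hi y"
  define w where "w = (lo x + hi y) / 2"
  have w: "hi y < w" "w < lo x"
    using \<open>\<not> lo x \<le> hi y\<close> by (auto simp: w_def)
  define G where "G = (w * (1 - w)) *\<^sub>R D - (1 - w) *\<^sub>R MA - w *\<^sub>R MB"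
  have G: "quad_form G z = gap z w" for z
    by (simp add: G_def gap_eq_quad_form)
  have Gx: "quad_form G x < 0" and Gy: "quad_form G y < 0"
    using gap_nonneg_iff[OF x, of w] gap_nonneg_iff[OF y, of w] w by (auto simp: G)
  \<comment> \<open>Flipping the sign of y makes the cross term nonpositive,
    so G stays negative on the whole segment from x to y'.\<close>
  obtain y' where y': "\<And>A. quad_form A y' = quad_form A y"
    and cross: "x \<bullet> (G *v y') + y' \<bullet> (G *v x) \<le> 0"
  proof (cases "x \<bullet> (G *v y) + y \<bullet> (G *v x) \<le> 0")
    case True
    then show ?thesis using that by blast
  next
    case False
    then show ?thesis
      using that[of "- y"] by (simp add: quad_form_uminus_right matrix_vector_mult_uminus_right)
  qed
  define z where "z t = (1 - t) *\<^sub>R x + t *\<^sub>R y'" for t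
  have z_neg: "quad_form G (z t) < 0" if "t \<in> {0..1}" for t
    using quad_form_segment_neg[OF Gx _ cross] that Gy y' by (simp add: z_def)
  have "\<exists>t\<in>{0..1}. 0 \<le> gap (z t) w"
  proof (rule ex_nonneg_gap_on_path)
    show "continuous_on {0..1} z"
      unfolding z_def by (intro continuous_intros)
    show "z t \<noteq> 0" if "t \<in> {0..1}" for t
      using z_neg[OF that] by force
    show "vertex (z 1) \<le> w"
      using weight_poly_roots.weight_vertex_le_hi[OF roots[OF y]] w y'
      by (simp add: z_def vertex_def hi_def)
    show "w \<le> vertex (z 0)"
      using weight_poly_roots.weight_lo_le_vertex[OF roots[OF x]] w
      by (simp add: z_def vertex_def lo_def)
  qed
  then show False
    using z_neg by (auto simp: G not_le[symmetric])
qed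

theorem ex_common_weight:
  "\<exists>w\<in>{0..1}. \<forall>z. (1 - w) * quad_form MA z + w * quad_form MB z \<le> w * (1 - w) * quad_form D z"
proof -
  define e :: "real^'n" where "e = vec 1"
  have e: "e \<noteq> 0"
    by (simp add: e_def vec_eq_iff)
  then have "{z :: real^'n. z \<noteq> 0} \<noteq> {}"
    by blast
  then have "\<exists>w. \<forall>z\<in>{z. z \<noteq> 0}. lo z \<le> w \<and> w \<le> hi z"
    by (rule pairwise_meeting_intervals_common_point) (simp add: lo_le_hi)
  then obtain w where w: "\<And>z. z \<noteq> 0 \<Longrightarrow> lo z \<le> w \<and> w \<le> hi z"
    by auto
  have "0 \<le> w" "w \<le> 1"
    using w[OF e] weight_poly_roots.weight_lo_nonneg[OF roots[OF e]]
      weight_poly_roots.weight_hi_le_1[OF roots[OF e]]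
    by (auto simp: lo_def hi_def)
  moreover have "(1 - w) * quad_form MA z + w * quad_form MB z \<le> w * (1 - w) * quad_form D z"
    for z
  proof -
    have "0 \<le> gap z w"
      using w gap_nonneg_iff by (cases "z = 0") (auto simp: gap_def weight_poly_def)
    then show ?thesis
      by (simp add: gap_def weight_poly_def)
  qed
  ultimately show ?thesis
    by (intro bexI[of _ w]) auto
qed

end

section \<open>Split covariance intersection for a fixed weight\<close>

declare transpose_matrix_vector [simp del]
  \<comment> \<open>keep \<open>K\<^sup>T z\<close> as \<open>transpose K *v z\<close>, not \<open>z v* K\<close>\<close>

lemma quad_form_eq_inner_of_mult:
  "A *v x = c *\<^sub>R g \<Longrightarrow> quad_form A x = c * (x \<bullet> g)"
  by (simp add: quad_form_def)

lemma quad_form_tangent_le_of_mult: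
  assumes "psd A" "A *v y = c *\<^sub>R g"
  shows "c * (2 * (x \<bullet> g) - y \<bullet> g) \<le> quad_form A x"
  using quad_form_tangent_le[OF assms(1), of x y] quad_form_eq_inner_of_mult[OF assms(2)] assms(2)
  by (simp add: right_diff_distrib)

locale sci =
  fixes PA PB QA QB :: "real^'n^'n" and w :: real
  assumes pd_PA: "pd PA" and pd_PB: "pd PB" and pd_QA: "pd QA" and pd_QB: "pd QB"
    and w_nonneg: "0 \<le> w" and w_le_1: "w \<le> 1"
begin

definition "RA = PA + w *\<^sub>R QA"
definition "RB = PB + (1 - w) *\<^sub>R QB"
definition "S = w *\<^sub>R matrix_inv RA + (1 - w) *\<^sub>R matrix_inv RB"
definition "B = matrix_inv S"
definition "KA = w *\<^sub>R (B ** matrix_inv RA)"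
definition "KB = (1 - w) *\<^sub>R (B ** matrix_inv RB)"

lemma B_SCI_eq: "B_SCI PA PB QA QB w = B"
  unfolding B_SCI_def B_def S_def RA_def RB_def ..

lemma pd_RA: "pd RA"
  unfolding RA_def using pd_PA pd_imp_psd[OF pd_QA] w_nonneg by (rule pd_add_scaleR)

lemma pd_RB: "pd RB"
  unfolding RB_def using pd_PB pd_imp_psd[OF pd_QB] w_le_1 by (intro pd_add_scaleR) auto

lemma pd_S: "pd S"
  unfolding S_def using pd_matrix_inv[OF pd_RA] pd_matrix_inv[OF pd_RB] w_nonneg w_le_1
  by (rule pd_convex_comb)

lemma pd_B: "pd B"
  unfolding B_def using pd_S by (rule pd_matrix_inv)

lemma B_at_0:
  assumes "w = 0"
  shows "B = PB + QB"
proof -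
  have "B = matrix_inv (matrix_inv RB)"
    unfolding B_def S_def using assms by simp
  also have "\<dots> = RB"
    using pd_RB by (simp add: matrix_inv_matrix_inv pd_imp_invertible)
  finally show ?thesis
    unfolding RB_def using assms by simp
qed

lemma B_at_1:
  assumes "w = 1"
  shows "B = PA + QA"
proof -
  have "B = matrix_inv (matrix_inv RA)"
    unfolding B_def S_def using assms by simp
  also have "\<dots> = RA"
    using pd_RA by (simp add: matrix_inv_matrix_inv pd_imp_invertible)
  finally show ?thesis
    unfolding RA_def using assms by simp
qed

lemma transpose_KA_at_0: "w = 0 \<Longrightarrow> transpose KA *v z = 0"
  unfolding KA_def transpose_scalar by simp

lemma transpose_KB_at_1: "w = 1 \<Longrightarrow> transpose KB *v z = 0"
  unfolding KB_def transpose_scalar by simp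

lemma quad_form_RA_div: "0 < w \<Longrightarrow> quad_form RA u / w = quad_form PA u / w + quad_form QA u"
  unfolding RA_def quad_form_add quad_form_scaleR by (simp add: add_divide_distrib)

lemma quad_form_RB_div:
  "w < 1 \<Longrightarrow> quad_form RB v / (1 - w) = quad_form PB v / (1 - w) + quad_form QB v"
  unfolding RB_def quad_form_add quad_form_scaleR by (simp add: add_divide_distrib)

lemma KA_add_KB: "KA + KB = mat 1"
proof -
  have "KA + KB = B ** S"
    unfolding KA_def KB_def S_def
    by (simp add: matrix_add_ldistrib matrix_scalar_ac scalar_matrix_assoc)
  then show ?thesis
    unfolding B_def using matrix_inv_left[OF pd_imp_invertible[OF pd_S]] by simp
qed

lemma transpose_KA_add_KB: "transpose KA *v z + transpose KB *v z = z"
  using KA_add_KB by (rule transpose_mult_add_eq_self)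

lemma transpose_gain:
  assumes "pd R"
  shows "transpose (c *\<^sub>R (B ** matrix_inv R)) = c *\<^sub>R (matrix_inv R ** B)"
  using pd_B pd_matrix_inv[OF assms]
  by (simp add: transpose_scalar matrix_transpose_mul pd_def sym_mat_def)

lemma RA_transpose_KA: "RA *v (transpose KA *v z) = w *\<^sub>R (B *v z)"
  using matrix_inv_right[OF pd_imp_invertible[OF pd_RA]]
  by (simp add: KA_def transpose_gain[OF pd_RA] matrix_vector_mul_assoc scaleR_matrix_vector_assoc[symmetric]
      matrix_vector_mult_scaleR matrix_mul_assoc)

lemma RB_transpose_KB: "RB *v (transpose KB *v z) = (1 - w) *\<^sub>R (B *v z)"
  using matrix_inv_right[OF pd_imp_invertible[OF pd_RB]]
  by (simp add: KB_def transpose_gain[OF pd_RB] matrix_vector_mul_assoc scaleR_matrix_vector_assoc[symmetric]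
      matrix_vector_mult_scaleR matrix_mul_assoc)

lemma quad_form_B_eq:
  assumes "0 < w" "w < 1"
  shows "quad_form B z = quad_form RA (transpose KA *v z) / w + quad_form RB (transpose KB *v z) / (1 - w)"
proof -
  have "quad_form B z = (transpose KA *v z + transpose KB *v z) \<bullet> (B *v z)"
    unfolding transpose_KA_add_KB quad_form_def ..
  then show ?thesis
    using assms quad_form_eq_inner_of_mult[OF RA_transpose_KA] quad_form_eq_inner_of_mult[OF RB_transpose_KB]
    by (simp add: inner_add_left)
qed

text \<open>\<open>quad_form B z\<close> is the minimum over all splits \<open>u + v = z\<close>; by \<open>quad_form_B_eq\<close> it is
  attained at the split given by the gains.\<close>

lemma quad_form_B_le:
  assumes "0 < w" "w < 1" and "u + v = z"
  shows "quad_form B z \<le> quad_form RA u / w + quad_form RB v / (1 - w)"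
proof -
  let ?u = "transpose KA *v z" and ?v = "transpose KB *v z" and ?g = "B *v z"
  have "w * (2 * (u \<bullet> ?g) - ?u \<bullet> ?g) \<le> quad_form RA u"
    using pd_imp_psd[OF pd_RA] RA_transpose_KA by (rule quad_form_tangent_le_of_mult)
  then have u: "2 * (u \<bullet> ?g) - ?u \<bullet> ?g \<le> quad_form RA u / w"
    using assms(1) by (simp add: pos_le_divide_eq mult.commute)
  have "(1 - w) * (2 * (v \<bullet> ?g) - ?v \<bullet> ?g) \<le> quad_form RB v"
    using pd_imp_psd[OF pd_RB] RB_transpose_KB by (rule quad_form_tangent_le_of_mult)
  then have v: "2 * (v \<bullet> ?g) - ?v \<bullet> ?g \<le> quad_form RB v / (1 - w)"
    using assms(2) by (simp add: pos_le_divide_eq mult.commute)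
  have "quad_form B z = 2 * ((u + v) \<bullet> ?g) - (?u + ?v) \<bullet> ?g"
    using assms(3) by (simp add: transpose_KA_add_KB quad_form_def)
  with u v show ?thesis by (simp add: inner_add_left)
qed

lemma quad_form_C_F_le:
  assumes PAB: "PAB \<in> A_split PA PB"
  shows "quad_form (C_F (PA + QA) (PB + QB) KA KB PAB) z \<le> quad_form B z"
proof -
  let ?u = "transpose KA *v z" and ?v = "transpose KB *v z"
  have CF: "quad_form (C_F (PA + QA) (PB + QB) KA KB PAB) z = quad_form PA ?u + quad_form QA ?u
      + 2 * (?u \<bullet> (PAB *v ?v)) + quad_form PB ?v + quad_form QB ?v"
    by (simp add: quad_form_C_F quad_form_add)
  consider "w = 0" | "w = 1" | "0 < w" "w < 1"
    using w_nonneg w_le_1 by linarith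
  then show ?thesis
  proof cases
    case 1
    then have "?u = 0" by (rule transpose_KA_at_0)
    then have "?u = 0" "?v = z"
      using transpose_KA_add_KB[of z] by simp_all
    then show ?thesis
      unfolding CF B_at_0[OF 1] by (simp add: quad_form_add)
  next
    case 2
    then have "?v = 0" by (rule transpose_KB_at_1)
    then have "?v = 0" "?u = z"
      using transpose_KA_add_KB[of z] by simp_all
    then show ?thesis
      unfolding CF B_at_1[OF 2] by (simp add: quad_form_add)
  next
    case 3
    let ?a = "quad_form PA ?u" and ?b = "quad_form PB ?v" and ?X = "?u \<bullet> (PAB *v ?v)"
    \<comment> \<open>The split condition tested on the vector ((1 - w) u, - w v) bounds the cross term.\<close>
    have "\<forall>p q. 0 \<le> quad_form PA p + 2 * (p \<bullet> (PAB *v q)) + quad_form PB q"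
      using PAB pd_PA pd_PB by (simp add: A_split_iff pd_def)
    then have "0 \<le> quad_form PA ((1 - w) *\<^sub>R ?u) + 2 * (((1 - w) *\<^sub>R ?u) \<bullet> (PAB *v ((- w) *\<^sub>R ?v)))
        + quad_form PB ((- w) *\<^sub>R ?v)"
      by blast
    moreover have "((1 - w) *\<^sub>R ?u) \<bullet> (PAB *v ((- w) *\<^sub>R ?v)) = - (?X * (w * (1 - w)))"
      by (simp add: matrix_vector_mult_scaleR matrix_vector_mult_uminus_right mult_ac)
    moreover have "quad_form PA ((1 - w) *\<^sub>R ?u) = (1 - w)\<^sup>2 * ?a"
      by (rule quad_form_scaleR_right)
    moreover have "quad_form PB ((- w) *\<^sub>R ?v) = w\<^sup>2 * ?b"
      by (simp add: quad_form_uminus_right quad_form_scaleR_right)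
    ultimately have "2 * (?X * (w * (1 - w))) \<le> (1 - w)\<^sup>2 * ?a + w\<^sup>2 * ?b"
      by linarith
    with 3 have cross: "?a + 2 * ?X + ?b \<le> ?a / w + ?b / (1 - w)"
      by (intro weighted_cross_le)
    have "quad_form (C_F (PA + QA) (PB + QB) KA KB PAB) z
        = (?a + 2 * ?X + ?b) + (quad_form QA ?u + quad_form QB ?v)"
      unfolding CF by (simp add: add_ac)
    also have "\<dots> \<le> (?a / w + ?b / (1 - w)) + (quad_form QA ?u + quad_form QB ?v)"
      using cross by (rule add_right_mono)
    also have "\<dots> = quad_form B z"
      unfolding quad_form_B_eq[OF 3] quad_form_RA_div[OF 3(1)] quad_form_RB_div[OF 3(2)]
      by (simp only: add_ac)
    finally show ?thesis .
  qed
qed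

lemma conservative_fusion: "conservative_fusion PA PB (PA + QA) (PB + QB) KA KB B"
  unfolding conservative_fusion_def
proof (intro conjI ballI)
  show "sym_mat B" using pd_B by (simp add: pd_def)
  show "KA + KB = mat 1" by (rule KA_add_KB)
  fix PAB assume "PAB \<in> A_split PA PB"
  then show "loewner_le (C_F (PA + QA) (PB + QB) KA KB PAB) B"
    using pd_PA pd_PB pd_QA pd_QB pd_B quad_form_C_F_le
    by (intro loewner_leI sym_mat_C_F) (simp_all add: pd_def sym_mat_add)
qed

lemma quad_form_B_le_of_bound:
  assumes "u + v = z"
    and bound: "quad_form (PA + QA) u + quad_form (PB + QB) v
                + 2 * sqrt (quad_form PA u * quad_form PB v) \<le> e"
    and weighted: "(1 - w) * quad_form PA u + w * quad_form PB v
                   \<le> w * (1 - w) * (e - quad_form QA u - quad_form QB v)"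
  shows "quad_form B z \<le> e"
proof -
  consider "w = 0" | "w = 1" | "0 < w" "w < 1"
    using w_nonneg w_le_1 by linarith
  then show ?thesis
  proof cases
    case 1
    then have "u = 0"
      using weighted pd_quad_form_eq_0_iff[OF pd_PA] quad_form_nonneg[OF pd_imp_psd[OF pd_PA], of u]
      by simp
    then show ?thesis
      using assms(1) bound by (simp add: B_at_0[OF 1])
  next
    case 2
    then have "v = 0"
      using weighted pd_quad_form_eq_0_iff[OF pd_PB] quad_form_nonneg[OF pd_imp_psd[OF pd_PB], of v]
      by simp
    then show ?thesis
      using assms(1) bound by (simp add: B_at_1[OF 2])
  next
    case 3
    have "quad_form PA u / w + quad_form PB v / (1 - w)
        = ((1 - w) * quad_form PA u + w * quad_form PB v) / (w * (1 - w))"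
      using 3 by (simp add: field_simps)
    also have "\<dots> \<le> e - quad_form QA u - quad_form QB v"
      using weighted 3 by (simp add: pos_divide_le_eq mult.commute)
    finally have "quad_form PA u / w + quad_form PB v / (1 - w) \<le> e - quad_form QA u - quad_form QB v" .
    moreover have "quad_form B z \<le> quad_form RA u / w + quad_form RB v / (1 - w)"
      using 3 assms(1) by (rule quad_form_B_le)
    ultimately show ?thesis
      unfolding quad_form_RA_div[OF 3(1)] quad_form_RB_div[OF 3(2)] by linarith
  qed
qed

end

lemma sci_conservative_fusion:
  assumes "pd PA" "pd PB" "pd QA" "pd QB" "w \<in> {0..1}"
  shows "conservative_fusion PA PB (PA + QA) (PB + QB)
           (w *\<^sub>R (B_SCI PA PB QA QB w ** matrix_inv (PA + w *\<^sub>R QA)))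
           ((1 - w) *\<^sub>R (B_SCI PA PB QA QB w ** matrix_inv (PB + (1 - w) *\<^sub>R QB)))
           (B_SCI PA PB QA QB w)"
proof -
  interpret sci PA PB QA QB w
    using assms by unfold_locales auto
  show ?thesis
    using conservative_fusion unfolding KA_def KB_def RA_def RB_def B_SCI_eq .
qed

lemma conservative_fusion_weight_forms:
  fixes PA PB QA QB KA KB BF :: "real^'n^'n"
  assumes pd: "pd PA" "pd PB" "pd QA" "pd QB"
    and cons: "conservative_fusion PA PB (PA + QA) (PB + QB) KA KB BF"
  shows "weight_forms (KA ** PA ** transpose KA) (KB ** PB ** transpose KB)
           (BF - KA ** QA ** transpose KA - KB ** QB ** transpose KB)"
proof
  fix z :: "real^'n"
  let ?u = "transpose KA *v z" and ?v = "transpose KB *v z"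
  show "0 \<le> quad_form (KA ** PA ** transpose KA) z" "0 \<le> quad_form (KB ** PB ** transpose KB) z"
    using pd by (simp_all add: quad_form_conj quad_form_nonneg pd_imp_psd)
  show "0 < quad_form (KA ** PA ** transpose KA) z + quad_form (KB ** PB ** transpose KB) z"
    if "z \<noteq> 0"
  proof -
    have "?u + ?v = z"
      using cons unfolding conservative_fusion_def by (intro transpose_mult_add_eq_self) simp
    with that have "?u \<noteq> 0 \<or> ?v \<noteq> 0"
      by auto
    then show ?thesis
      unfolding quad_form_conj
      using quad_form_pos[OF pd(1)] quad_form_pos[OF pd(2)]
        quad_form_nonneg[OF pd_imp_psd[OF pd(1)]] quad_form_nonneg[OF pd_imp_psd[OF pd(2)]]
      by (meson add_nonneg_pos add_pos_nonneg)
  qed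
  show "quad_form (KA ** PA ** transpose KA) z + quad_form (KB ** PB ** transpose KB) z
      + 2 * sqrt (quad_form (KA ** PA ** transpose KA) z * quad_form (KB ** PB ** transpose KB) z)
      \<le> quad_form (BF - KA ** QA ** transpose KA - KB ** QB ** transpose KB) z"
    using conservative_fusion_quad_form_bound[OF pd_imp_psd[OF pd(1)] pd_imp_psd[OF pd(2)] cons, of z]
    unfolding quad_form_conj quad_form_diff quad_form_add by simp
qed

theorem conservative_fusion_dominates_sci:
  fixes PA PB QA QB KA KB BF :: "real^'n^'n"
  assumes pd: "pd PA" "pd PB" "pd QA" "pd QB"
    and cons: "conservative_fusion PA PB (PA + QA) (PB + QB) KA KB BF"
  shows "\<exists>w\<in>{0..1}. loewner_le (B_SCI PA PB QA QB w) BF"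
proof -
  interpret weight_forms "KA ** PA ** transpose KA" "KB ** PB ** transpose KB"
    "BF - KA ** QA ** transpose KA - KB ** QB ** transpose KB"
    using pd cons by (rule conservative_fusion_weight_forms)
  obtain w where w: "w \<in> {0..1}" and weighted:
    "\<And>z. (1 - w) * quad_form PA (transpose KA *v z) + w * quad_form PB (transpose KB *v z)
       \<le> w * (1 - w) * (quad_form BF z - quad_form QA (transpose KA *v z)
                         - quad_form QB (transpose KB *v z))"
    using ex_common_weight unfolding quad_form_conj quad_form_diff by blast
  interpret sci PA PB QA QB w
    using pd w by unfold_locales auto
  have "loewner_le B BF"
  proof (rule loewner_leI)
    show "sym_mat B" using pd_B by (simp add: pd_def)
    show "sym_mat BF" using cons by (simp add: conservative_fusion_def)
    fix z
    have "transpose KA *v z + transpose KB *v z = z"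
      using cons unfolding conservative_fusion_def by (intro transpose_mult_add_eq_self) simp
    moreover have "quad_form (PA + QA) (transpose KA *v z) + quad_form (PB + QB) (transpose KB *v z)
        + 2 * sqrt (quad_form PA (transpose KA *v z) * quad_form PB (transpose KB *v z))
        \<le> quad_form BF z"
      using pd_imp_psd[OF pd(1)] pd_imp_psd[OF pd(2)] cons by (rule conservative_fusion_quad_form_bound)
    ultimately show "quad_form B z \<le> quad_form BF z"
      using weighted by (rule quad_form_B_le_of_bound)
  qed
  then have "loewner_le (B_SCI PA PB QA QB w) BF"
    by (simp add: B_SCI_eq)
  with w show ?thesis by blast
qed

theorem corollary1:
  fixes PA PB QA QB :: "real ^ 'n ^ 'n" and J :: "real ^ 'n ^ 'n \<Rightarrow> real" and \<omega>s :: real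
  assumes "pd PA" and "pd PB" and "pd QA" and "pd QB"
    and "increasing_cost J"
    and "\<omega>s \<in> {0..1}"
    and "\<forall>\<omega> \<in> {0..1}. J (B_SCI PA PB QA QB \<omega>s) \<le> J (B_SCI PA PB QA QB \<omega>)"
  shows "conservative_fusion PA PB (PA + QA) (PB + QB)
           (\<omega>s *\<^sub>R (B_SCI PA PB QA QB \<omega>s ** matrix_inv (PA + \<omega>s *\<^sub>R QA)))
           ((1 - \<omega>s) *\<^sub>R (B_SCI PA PB QA QB \<omega>s ** matrix_inv (PB + (1 - \<omega>s) *\<^sub>R QB)))
           (B_SCI PA PB QA QB \<omega>s)
       \<and> (\<forall>KA KB BF. conservative_fusion PA PB (PA + QA) (PB + QB) KA KB BF
           \<longrightarrow> J (B_SCI PA PB QA QB \<omega>s) \<le> J BF)"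
proof (intro conjI allI impI)
  show "conservative_fusion PA PB (PA + QA) (PB + QB)
           (\<omega>s *\<^sub>R (B_SCI PA PB QA QB \<omega>s ** matrix_inv (PA + \<omega>s *\<^sub>R QA)))
           ((1 - \<omega>s) *\<^sub>R (B_SCI PA PB QA QB \<omega>s ** matrix_inv (PB + (1 - \<omega>s) *\<^sub>R QB)))
           (B_SCI PA PB QA QB \<omega>s)"
    using assms(1-4,6) by (rule sci_conservative_fusion)
  fix KA KB BF
  assume cons: "conservative_fusion PA PB (PA + QA) (PB + QB) KA KB BF"
  obtain w where w: "w \<in> {0..1}" and le: "loewner_le (B_SCI PA PB QA QB w) BF"
    using conservative_fusion_dominates_sci[OF assms(1-4) cons] by blast
  have "sym_mat (B_SCI PA PB QA QB w)" and "sym_mat BF"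
    using sci_conservative_fusion[OF assms(1-4) w] cons by (simp_all add: conservative_fusion_def)
  with le assms(5) have "J (B_SCI PA PB QA QB w) \<le> J BF"
    unfolding increasing_cost_def by blast
  moreover have "J (B_SCI PA PB QA QB \<omega>s) \<le> J (B_SCI PA PB QA QB w)"
    using assms(7) w by blast
  ultimately show "J (B_SCI PA PB QA QB \<omega>s) \<le> J BF" by linarith
qed

end
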